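(* For every integer $k\ge 2$ and every $n\ge 0$, the cube polynomial $C_{\Pi_{n,k}}(x)$ has degree $n$ and $$C_{\Pi_{n,k}}(x)=\sum_{i=0}^{\lfloor n/2\rfloor}\binom{n-i}{i}\bigl(k+(k-1)x\bigr)^{n-2i}(1+x)^{i}.$$
   Context: For an integer $k\ge 2$, a $k$-Pell string is a finite word over the alphabet $\{0,1,\ldots,k-1,kk\}$, i.e. a word over $\{0,1,\ldots,k\}$ in which every maximal run of the letter $k$ has even length. For $n\ge 0$, the $k$-Pell graph $\Pi_{n,k}$ has as vertices all $k$-Pell strings of length $n$, and two vertices are adjacent if one is obtained from the other either by replacing a single letter $i$ by $i+1$ (or vice versa) for some $i\in\{0,1,\ldots,k-2\}$, or by replacing one factor $(k-1)(k-1)$ by $kk$ (or vice versa), in such a way that the resulting string is again a $k$-Pell string. The cube polynomial of a graph $G$ is $C_G(x)=\sum_{i\ge 0}c_i(G)x^i$, where $c_i(G)$ is the number of induced subgraphs of $G$ isomorphic to the hypercube $Q_i$. *)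

theory Defs
  imports Main "HOL-Computational_Algebra.Polynomial"
begin

text \<open>k-Pell strings: words over the alphabet {0,...,k-1, kk}, written as lists of naturals.\<close>
inductive pell_string :: "nat \<Rightarrow> nat list \<Rightarrow> bool" for k where
  pell_nil: "pell_string k []"
| pell_digit: "a < k \<Longrightarrow> pell_string k w \<Longrightarrow> pell_string k (a # w)"
| pell_kk: "pell_string k w \<Longrightarrow> pell_string k (k # k # w)"

definition pell_vertices :: "nat \<Rightarrow> nat \<Rightarrow> nat list set" where
  "pell_vertices n k = {w. length w = n \<and> pell_string k w}"

definition pell_move :: "nat \<Rightarrow> nat list \<Rightarrow> nat list \<Rightarrow> bool" where
  "pell_move k u v \<longleftrightarrow> length u = length v \<and>
     ((\<exists>j < length u. \<exists>i. i + 2 \<le> k \<and> u ! j = i \<and> v ! j = i + 1 \<and>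
         (\<forall>l < length u. l \<noteq> j \<longrightarrow> u ! l = v ! l))
    \<or> (\<exists>j. j + 1 < length u \<and> u ! j = k - 1 \<and> u ! (j+1) = k - 1 \<and>
         v ! j = k \<and> v ! (j+1) = k \<and>
         (\<forall>l < length u. l \<noteq> j \<longrightarrow> l \<noteq> j + 1 \<longrightarrow> u ! l = v ! l)))"

definition pell_adj :: "nat \<Rightarrow> nat \<Rightarrow> nat list \<Rightarrow> nat list \<Rightarrow> bool" where
  "pell_adj n k u v \<longleftrightarrow> u \<in> pell_vertices n k \<and> v \<in> pell_vertices n k \<and>
     (pell_move k u v \<or> pell_move k v u)"

definition cube_vertices :: "nat \<Rightarrow> bool list set" where
  "cube_vertices i = {w. length w = i}"

definition cube_adj :: "bool list \<Rightarrow> bool list \<Rightarrow> bool" where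
  "cube_adj u v \<longleftrightarrow> length u = length v \<and> card {j. j < length u \<and> u ! j \<noteq> v ! j} = 1"

definition num_induced_cubes :: "'a set \<Rightarrow> ('a \<Rightarrow> 'a \<Rightarrow> bool) \<Rightarrow> nat \<Rightarrow> nat" where
  "num_induced_cubes V E i = card {S. S \<subseteq> V \<and>
     (\<exists>f. bij_betw f (cube_vertices i) S \<and>
        (\<forall>u\<in>cube_vertices i. \<forall>v\<in>cube_vertices i. cube_adj u v \<longleftrightarrow> E (f u) (f v)))}"

text \<open>Cube polynomial of a finite graph; c_i = 0 whenever i > card V, so the sum is complete.\<close>
definition cube_poly :: "'a set \<Rightarrow> ('a \<Rightarrow> 'a \<Rightarrow> bool) \<Rightarrow> int poly" where
  "cube_poly V E = (\<Sum>i\<le>card V. monom (int (num_induced_cubes V E i)) i)"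

end

theory Submission
  imports Defs
begin

(*
  Replacing every block kk of a k-Pell string by k(k-1) identifies Pi_{n,k} with the subgraph of
  the grid N^n induced by the coded strings: a letter step i <-> i+1 stays a unit step, and
  (k-1)(k-1) <-> kk becomes the unit step (k-1)(k-1) <-> k(k-1) in the first coordinate.
  The induced hypercubes of a grid are exactly the boxes [l_1,u_1] x ... x [l_n,u_n] with all
  u_p - l_p in {0,1}, of dimension the number of nondegenerate factors. So c_i(Pi_{n,k}) counts the
  i-dimensional such boxes all of whose points are coded Pell strings. Such a box starts either
  with a digit interval ([a,a] with a < k, or [a,a+1] with a+1 < k) followed by a box of length
  n-1, or with [k-1,k] or [k,k] followed by the fixed coordinate k-1 and a box of length n-2.
  Hence C_n = (k + (k-1)x) C_{n-1} + (1+x) C_{n-2} with C_0 = 1 and C_1 = k + (k-1)x, which is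
  solved by the stated Fibonacci-type sum; as the coefficient k + (k-1)x has degree 1 and 1+x has
  degree at most 1, C_n has degree n.
*)

section \<open>Induced cubes and graph isomorphisms\<close>

definition cube_embedding :: "nat \<Rightarrow> (bool list \<Rightarrow> 'a) \<Rightarrow> 'a set \<Rightarrow> ('a \<Rightarrow> 'a \<Rightarrow> bool) \<Rightarrow> bool" where
  "cube_embedding d h S E \<longleftrightarrow> bij_betw h (cube_vertices d) S \<and>
     (\<forall>x\<in>cube_vertices d. \<forall>y\<in>cube_vertices d. cube_adj x y \<longleftrightarrow> E (h x) (h y))"

lemma num_induced_cubes_altdef:
  "num_induced_cubes V E d = card {S. S \<subseteq> V \<and> (\<exists>h. cube_embedding d h S E)}"
  by (simp add: num_induced_cubes_def cube_embedding_def)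

lemma cube_embedding_transfer:
  assumes "bij_betw \<phi> V W" "\<And>u v. u \<in> V \<Longrightarrow> v \<in> V \<Longrightarrow> E u v \<longleftrightarrow> E' (\<phi> u) (\<phi> v)"
    and "S \<subseteq> V" "cube_embedding d h S E"
  shows "cube_embedding d (\<phi> \<circ> h) (\<phi> ` S) E'"
proof -
  have "bij_betw \<phi> S (\<phi> ` S)"
    using assms(1,3) bij_betw_subset by blast
  then have "bij_betw (\<phi> \<circ> h) (cube_vertices d) (\<phi> ` S)"
    using assms(4) bij_betw_trans by (auto simp: cube_embedding_def)
  moreover have "h x \<in> V" if "x \<in> cube_vertices d" for x
    using assms(3,4) that by (auto simp: cube_embedding_def bij_betw_def)
  ultimately show ?thesis
    using assms(2,4) by (simp add: cube_embedding_def)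
qed

lemma num_induced_cubes_iso:
  assumes \<phi>: "bij_betw \<phi> V W" and E: "\<And>u v. u \<in> V \<Longrightarrow> v \<in> V \<Longrightarrow> E u v \<longleftrightarrow> E' (\<phi> u) (\<phi> v)"
  shows "num_induced_cubes V E d = num_induced_cubes W E' d"
proof -
  let ?\<psi> = "inv_into V \<phi>"
  have \<psi>: "bij_betw ?\<psi> W V" using \<phi> by (rule bij_betw_inv_into)
  have E': "E' u v \<longleftrightarrow> E (?\<psi> u) (?\<psi> v)" if "u \<in> W" "v \<in> W" for u v
    using E[of "?\<psi> u" "?\<psi> v"] \<psi> \<phi> that by (auto simp: bij_betw_def f_inv_into_f)
  let ?C = "{S. S \<subseteq> V \<and> (\<exists>h. cube_embedding d h S E)}"
  let ?C' = "{S. S \<subseteq> W \<and> (\<exists>h. cube_embedding d h S E')}"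
  have "inj_on (image \<phi>) ?C"
    using inj_on_image_Pow[of \<phi> V] \<phi> by (auto simp: bij_betw_def inj_on_def)
  moreover have "image \<phi> ` ?C = ?C'"
  proof (intro equalityI subsetI)
    fix S' assume "S' \<in> image \<phi> ` ?C"
    then show "S' \<in> ?C'"
      using cube_embedding_transfer[of \<phi> V W E E'] \<phi> E by (auto simp: bij_betw_def)
  next
    fix S' assume "S' \<in> ?C'"
    then obtain h where S': "S' \<subseteq> W" "cube_embedding d h S' E'" by blast
    then have "cube_embedding d (?\<psi> \<circ> h) (?\<psi> ` S') E"
      by (intro cube_embedding_transfer[of ?\<psi> W V E' E, OF \<psi> E'])
    moreover have "?\<psi> ` S' \<subseteq> V" using S'(1) \<psi> by (auto simp: bij_betw_def)
    ultimately have "?\<psi> ` S' \<in> ?C" by blast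
    moreover have "\<phi> ` ?\<psi> ` S' = S'"
      using S'(1) by (rule image_inv_into_cancel[OF bij_betw_imp_surj_on[OF \<phi>]])
    ultimately show "S' \<in> image \<phi> ` ?C" by (intro rev_image_eqI[of "?\<psi> ` S'"]) simp_all
  qed
  ultimately have "bij_betw (image \<phi>) ?C ?C'" by (simp add: bij_betw_def)
  then show ?thesis
    unfolding num_induced_cubes_altdef by (simp add: bij_betw_same_card)
qed

lemma cube_vertices_Suc: "cube_vertices (Suc d) = (\<Union>a. Cons a ` cube_vertices d)"
  by (auto simp: cube_vertices_def length_Suc_conv)

lemma cube_adj_Cons: "cube_adj (a # x) (c # y) \<longleftrightarrow> (a = c \<and> cube_adj x y) \<or> (a \<noteq> c \<and> x = y)"
proof -
  define D where "D = {j. j < length x \<and> x ! j \<noteq> y ! j}"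
  have "{j. j < length (a # x) \<and> (a # x) ! j \<noteq> (c # y) ! j} = (if a \<noteq> c then {0} else {}) \<union> Suc ` D"
  proof (rule set_eqI)
    fix j
    show "j \<in> {j. j < length (a # x) \<and> (a # x) ! j \<noteq> (c # y) ! j} \<longleftrightarrow> j \<in> (if a \<noteq> c then {0} else {}) \<union> Suc ` D"
      by (cases j) (auto simp: D_def)
  qed
  then have "card {j. j < length (a # x) \<and> (a # x) ! j \<noteq> (c # y) ! j} = (if a \<noteq> c then 1 else 0) + card D"
    by (simp add: card_image D_def)
  moreover have "x = y \<longleftrightarrow> card D = 0" if "length x = length y"
    using that by (auto simp: D_def list_eq_iff_nth_eq)
  ultimately show ?thesis
    unfolding cube_adj_def D_def by auto
qed

lemma cube_adj_flip: "i < length x \<Longrightarrow> cube_adj x (x[i := \<not> x ! i])"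
proof -
  assume "i < length x"
  then have "{j. j < length x \<and> x ! j \<noteq> x[i := \<not> x ! i] ! j} = {i}"
    by (auto simp: nth_list_update)
  then show ?thesis by (simp add: cube_adj_def)
qed

section \<open>The grid graph and its boxes\<close>

fun grid_adj :: "nat list \<Rightarrow> nat list \<Rightarrow> bool" where
  "grid_adj (a # x) (b # y) \<longleftrightarrow> (a = b \<and> grid_adj x y) \<or> ((a = Suc b \<or> b = Suc a) \<and> x = y)"
| "grid_adj _ _ \<longleftrightarrow> False"

lemma grid_adj_length: "grid_adj x y \<Longrightarrow> length x = length y"
  by (induction x y rule: grid_adj.induct) auto

lemma grid_adj_sym: "grid_adj x y \<Longrightarrow> grid_adj y x"
  by (induction x y rule: grid_adj.induct) auto

lemma grid_adj_imp_update:
  "grid_adj u v \<Longrightarrow> \<exists>p a. p < length u \<and> v = u[p := a] \<and> (u ! p = Suc a \<or> a = Suc (u ! p))"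
proof (induction u v rule: grid_adj.induct)
  case (1 a x b y)
  show ?case
  proof (cases "a = b \<and> grid_adj x y")
    case True
    with "1.IH" obtain p c where "p < length x" "y = x[p := c]" "x ! p = Suc c \<or> c = Suc (x ! p)"
      by blast
    with True show ?thesis by (intro exI[of _ "Suc p"] exI[of _ c]) auto
  next
    case False
    with "1.prems" show ?thesis by (intro exI[of _ 0] exI[of _ b]) auto
  qed
qed auto

(* In a 4-cycle u, v, w, v' of the grid, v and v' move u in distinct coordinates and w makes both moves. *)
lemma grid_square:
  assumes "grid_adj u v" "grid_adj u v'" "grid_adj v w" "grid_adj v' w" "v \<noteq> v'" "u \<noteq> w"
    and "p < length u"
  shows "(v ! p = u ! p \<or> v' ! p = u ! p) \<and> w ! p = (if v ! p \<noteq> u ! p then v ! p else v' ! p)"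
  using assms
proof (induction u arbitrary: v v' w p)
  case Nil
  then show ?case by simp
next
  case (Cons a u)
  obtain b x where v: "v = b # x" using Cons.prems(1) by (cases v) auto
  obtain c x' where v': "v' = c # x'" using Cons.prems(2) by (cases v') auto
  obtain e y where w: "w = e # y" using Cons.prems(3) v by (cases w) auto
  show ?case
    using Cons.prems Cons.IH[of x x' y "p - 1"] unfolding v v' w
    by (cases p) (auto dest: grid_adj_sym grid_adj_length)
qed

definition box_points :: "(nat \<times> nat) list \<Rightarrow> nat list set" where
  "box_points B = {z. length z = length B \<and> (\<forall>p<length B. fst (B ! p) \<le> z ! p \<and> z ! p \<le> snd (B ! p))}"

definition unit_box :: "(nat \<times> nat) list \<Rightarrow> bool" where
  "unit_box B \<longleftrightarrow> (\<forall>(l, u) \<in> set B. u = l \<or> u = Suc l)"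

definition box_dim :: "(nat \<times> nat) list \<Rightarrow> nat" where
  "box_dim B = length (filter (\<lambda>(l, u). l \<noteq> u) B)"

lemma box_dim_Cons: "box_dim (q # B) = box_dim [q] + box_dim B"
  by (simp add: box_dim_def)

lemma box_dim_le_length: "box_dim B \<le> length B"
  by (simp add: box_dim_def)

lemma box_points_Nil [simp]: "box_points [] = {[]}"
  by (simp add: box_points_def)

lemma box_points_Cons: "box_points ((l, u) # B) = {a # z |a z. l \<le> a \<and> a \<le> u \<and> z \<in> box_points B}"
  by (auto simp: box_points_def length_Suc_conv nth_Cons split: nat.splits)

lemma Cons_mem_box_points [simp]:
  "a # z \<in> box_points ((l, u) # B) \<longleftrightarrow> l \<le> a \<and> a \<le> u \<and> z \<in> box_points B"
  by (simp add: box_points_Cons)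

lemma unit_box_imp_le: "unit_box B \<Longrightarrow> \<forall>(l, u) \<in> set B. l \<le> u"
  by (auto simp: unit_box_def)

lemma map_fst_in_box_points: "\<forall>(l, u) \<in> set B. l \<le> u \<Longrightarrow> map fst B \<in> box_points B"
  by (auto simp: box_points_def dest: nth_mem)

lemma box_points_nth_image:
  assumes "\<forall>(l, u) \<in> set B. l \<le> u" "p < length B"
  shows "(\<lambda>z. z ! p) ` box_points B = {fst (B ! p)..snd (B ! p)}"
proof (intro equalityI subsetI)
  fix a assume a: "a \<in> {fst (B ! p)..snd (B ! p)}"
  have "(map fst B)[p := a] \<in> box_points B"
    using map_fst_in_box_points[OF assms(1)] a assms(2) by (auto simp: box_points_def nth_list_update)
  then show "a \<in> (\<lambda>z. z ! p) ` box_points B"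
    using assms(2) by (metis image_eqI length_map nth_list_update_eq)
qed (use assms(2) in \<open>auto simp: box_points_def\<close>)

lemma box_points_inj:
  assumes "\<forall>(l, u) \<in> set B. l \<le> u" "\<forall>(l, u) \<in> set B'. l \<le> u" "box_points B = box_points B'"
  shows "B = B'"
proof (rule nth_equalityI)
  have "map fst B \<in> box_points B'"
    using map_fst_in_box_points[OF assms(1)] assms(3) by simp
  then show len: "length B = length B'"
    by (simp add: box_points_def)
  fix p assume "p < length B"
  then have "{fst (B ! p)..snd (B ! p)} = {fst (B' ! p)..snd (B' ! p)}"
    using box_points_nth_image[OF assms(1)] box_points_nth_image[OF assms(2)] assms(3) len by metis
  moreover have "fst (B ! p) \<le> snd (B ! p)" "fst (B' ! p) \<le> snd (B' ! p)"
    using assms(1,2) nth_mem[of p B] nth_mem[of p B'] \<open>p < length B\<close> len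
    by (auto simp: case_prod_beta)
  ultimately show "B ! p = B' ! p" by (simp add: prod_eq_iff)
qed

lemma cube_embedding_Cons_const:
  assumes "cube_embedding d h S grid_adj"
  shows "cube_embedding d (\<lambda>x. l # h x) (Cons l ` S) grid_adj"
  using assms unfolding cube_embedding_def bij_betw_def by (auto simp: inj_on_def)

lemma cube_embedding_Cons_edge:
  assumes h: "cube_embedding d h S grid_adj"
  shows "cube_embedding (Suc d) (\<lambda>x. (if hd x then Suc l else l) # h (tl x))
           {a # z |a z. l \<le> a \<and> a \<le> Suc l \<and> z \<in> S} grid_adj"
proof -
  have inj: "inj_on h (cube_vertices d)" and im: "h ` cube_vertices d = S"
    and adj: "\<forall>x\<in>cube_vertices d. \<forall>y\<in>cube_vertices d. cube_adj x y \<longleftrightarrow> grid_adj (h x) (h y)"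
    using h by (auto simp: cube_embedding_def bij_betw_def)
  let ?h = "\<lambda>x. (if hd x then Suc l else l) # h (tl x)"
  have "inj_on ?h (cube_vertices (Suc d))"
    using inj by (auto simp: cube_vertices_Suc inj_on_def split: if_splits)
  moreover have "?h ` cube_vertices (Suc d) = {a # z |a z. l \<le> a \<and> a \<le> Suc l \<and> z \<in> S}"
  proof (intro equalityI subsetI)
    fix v assume "v \<in> {a # z |a z. l \<le> a \<and> a \<le> Suc l \<and> z \<in> S}"
    then obtain a x where "v = a # h x" "l \<le> a" "a \<le> Suc l" "x \<in> cube_vertices d"
      using im by blast
    then have "v = ?h ((a = Suc l) # x)" "(a = Suc l) # x \<in> cube_vertices (Suc d)"
      by (auto simp: cube_vertices_Suc)
    then show "v \<in> ?h ` cube_vertices (Suc d)" by blast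
  qed (use im in \<open>auto simp: cube_vertices_Suc\<close>)
  moreover have "cube_adj v w \<longleftrightarrow> grid_adj (?h v) (?h w)"
    if "v \<in> cube_vertices (Suc d)" "w \<in> cube_vertices (Suc d)" for v w
    using that adj inj by (auto simp: cube_vertices_Suc cube_adj_Cons inj_on_eq_iff)
  ultimately show ?thesis by (auto simp: cube_embedding_def bij_betw_def)
qed

lemma box_cube_embedding: "unit_box B \<Longrightarrow> \<exists>h. cube_embedding (box_dim B) h (box_points B) grid_adj"
proof (induction B)
  case Nil
  have "cube_embedding 0 (\<lambda>_. []) {[]} grid_adj"
    by (auto simp: cube_embedding_def cube_vertices_def bij_betw_def inj_on_def cube_adj_def)
  then show ?case by (auto simp: box_dim_def)
next
  case (Cons q B)
  obtain l u where q: "q = (l, u)" by (cases q)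
  from Cons obtain h where h: "cube_embedding (box_dim B) h (box_points B) grid_adj"
    by (auto simp: unit_box_def)
  consider "u = l" | "u = Suc l" using Cons.prems q by (auto simp: unit_box_def)
  then show ?case
  proof cases
    case 1
    then have "box_points (q # B) = Cons l ` box_points B" "box_dim (q # B) = box_dim B"
      using q by (auto simp: box_points_Cons box_dim_def)
    then show ?thesis using cube_embedding_Cons_const[OF h, of l] by auto
  next
    case 2
    then have "box_points (q # B) = {a # z |a z. l \<le> a \<and> a \<le> Suc l \<and> z \<in> box_points B}"
      "box_dim (q # B) = Suc (box_dim B)"
      using q by (auto simp: box_points_Cons box_dim_def)
    then show ?thesis using cube_embedding_Cons_edge[OF h, of l] by auto
  qed
qed

section \<open>Induced cubes of the grid are boxes\<close>

(*
  f (unit_vertex i) moves the corner f (0...0) by one along the coordinate axis i. The axes are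
  pairwise distinct, and by grid_square f x moves the corner exactly along the axes of the ones of
  x; so the image of f is the box spanned by the corner and f (1...1).
*)
locale grid_cube =
  fixes d :: nat and f :: "bool list \<Rightarrow> nat list"
  assumes inj_f: "inj_on f (cube_vertices d)"
    and cube_adj_iff: "x \<in> cube_vertices d \<Longrightarrow> y \<in> cube_vertices d \<Longrightarrow> cube_adj x y \<longleftrightarrow> grid_adj (f x) (f y)"
begin

definition corner :: "nat list" where
  "corner = f (replicate d False)"

definition unit_vertex :: "nat \<Rightarrow> bool list" where
  "unit_vertex i = (replicate d False)[i := True]"

definition axis :: "nat \<Rightarrow> nat" where
  "axis i = (LEAST p. f (unit_vertex i) ! p \<noteq> corner ! p)"

definition axis_value :: "nat \<Rightarrow> nat" where
  "axis_value i = f (unit_vertex i) ! axis i"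

lemma grid_adj_flip: "x \<in> cube_vertices d \<Longrightarrow> i < d \<Longrightarrow> grid_adj (f x) (f (x[i := \<not> x ! i]))"
  using cube_adj_iff[of x "x[i := \<not> x ! i]"] cube_adj_flip[of i x] by (simp add: cube_vertices_def)

lemma f_unit_vertex:
  assumes "i < d"
  shows "axis i < length corner" "f (unit_vertex i) = corner[axis i := axis_value i]"
    and "corner ! axis i = Suc (axis_value i) \<or> axis_value i = Suc (corner ! axis i)"
proof -
  have "unit_vertex i = (replicate d False)[i := \<not> replicate d False ! i]"
    using assms by (simp add: unit_vertex_def)
  then have "grid_adj corner (f (unit_vertex i))"
    using grid_adj_flip[of "replicate d False" i] assms by (simp add: corner_def cube_vertices_def)
  then obtain p a where p: "p < length corner" "f (unit_vertex i) = corner[p := a]"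
    and a: "corner ! p = Suc a \<or> a = Suc (corner ! p)"
    using grid_adj_imp_update by blast
  have "axis i = p"
    unfolding axis_def using p a by (intro Least_equality) (auto simp: nth_list_update split: if_split_asm)
  with p a show "axis i < length corner" "f (unit_vertex i) = corner[axis i := axis_value i]"
    "corner ! axis i = Suc (axis_value i) \<or> axis_value i = Suc (corner ! axis i)"
    by (auto simp: axis_value_def)
qed

lemma axis_value_neq: "i < d \<Longrightarrow> axis_value i \<noteq> corner ! axis i"
  using f_unit_vertex(3) by fastforce

lemma inj_axis: "inj_on axis {..<d}"
proof (rule inj_onI, rule ccontr)
  fix i j assume i: "i \<in> {..<d}" and j: "j \<in> {..<d}" and eq: "axis i = axis j" and "i \<noteq> j"
  define z where "z = replicate d False"
  define both where "both = (unit_vertex i)[j := True]"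
  have cv: "z \<in> cube_vertices d" "unit_vertex i \<in> cube_vertices d" "unit_vertex j \<in> cube_vertices d"
    "both \<in> cube_vertices d"
    by (simp_all add: cube_vertices_def z_def both_def unit_vertex_def)
  have flips: "unit_vertex i = z[i := \<not> z ! i]" "unit_vertex j = z[j := \<not> z ! j]"
    "both = (unit_vertex i)[j := \<not> unit_vertex i ! j]" "both = (unit_vertex j)[i := \<not> unit_vertex j ! i]"
    using i j \<open>i \<noteq> j\<close> by (simp_all add: z_def both_def unit_vertex_def list_update_swap)
  have "unit_vertex i \<noteq> unit_vertex j" "z \<noteq> both"
    using i j \<open>i \<noteq> j\<close> by (auto simp: unit_vertex_def z_def both_def list_eq_iff_nth_eq)
  then have "f (unit_vertex i) \<noteq> f (unit_vertex j)" "f z \<noteq> f both"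
    using inj_f cv by (auto dest: inj_onD)
  moreover have "grid_adj (f z) (f (unit_vertex i))" "grid_adj (f z) (f (unit_vertex j))"
    "grid_adj (f (unit_vertex i)) (f both)" "grid_adj (f (unit_vertex j)) (f both)"
    using grid_adj_flip cv i j flips by (metis lessThan_iff)+
  ultimately have "f (unit_vertex i) ! axis i = corner ! axis i \<or> f (unit_vertex j) ! axis j = corner ! axis j"
    using grid_square[of "f z" "f (unit_vertex i)" "f (unit_vertex j)" "f both" "axis i"]
      f_unit_vertex(1) i j eq by (simp add: corner_def z_def)
  then show False
    using f_unit_vertex(1,2) axis_value_neq i j by auto
qed

definition grid_point :: "bool list \<Rightarrow> nat list \<Rightarrow> bool" where
  "grid_point x z \<longleftrightarrow> length z = length corner \<and>
     (\<forall>i<d. z ! axis i = (if x ! i then axis_value i else corner ! axis i)) \<and>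
     (\<forall>p<length corner. p \<notin> axis ` {..<d} \<longrightarrow> z ! p = corner ! p)"

lemma grid_point_unique: "grid_point x z \<Longrightarrow> grid_point x z' \<Longrightarrow> z = z'"
  unfolding grid_point_def by (metis (no_types, lifting) imageE lessThan_iff nth_equalityI)

lemma grid_point_corner: "grid_point (replicate d False) corner"
  by (simp add: grid_point_def)

lemma grid_point_unit_vertex:
  assumes "i < d"
  shows "grid_point (unit_vertex i) (f (unit_vertex i))"
  unfolding grid_point_def f_unit_vertex(2)[OF assms]
  using assms f_unit_vertex(1) inj_axis
  by (auto simp: unit_vertex_def nth_list_update inj_on_eq_iff)

lemma grid_point_square:
  assumes x: "x \<in> cube_vertices d" and ij: "i < d" "j < d" "i \<noteq> j" "x ! i" "x ! j"
    and points: "grid_point (x[i := False]) (f (x[i := False]))" "grid_point (x[j := False]) (f (x[j := False]))"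
      "grid_point (x[i := False, j := False]) (f (x[i := False, j := False]))"
  shows "grid_point x (f x)"
proof -
  define xi xj y where "xi = x[i := False]" and "xj = x[j := False]" and "y = x[i := False, j := False]"
  have lx: "length x = d" using x by (simp add: cube_vertices_def)
  have cv: "xi \<in> cube_vertices d" "xj \<in> cube_vertices d" "y \<in> cube_vertices d"
    using lx by (simp_all add: xi_def xj_def y_def cube_vertices_def)
  have flips: "xj = y[i := \<not> y ! i]" "xi = y[j := \<not> y ! j]" "x = xj[j := \<not> xj ! j]" "x = xi[i := \<not> xi ! i]"
    using ij lx by (auto simp: xi_def xj_def y_def nth_list_update split: if_split_asm intro!: nth_equalityI)
  have adj: "grid_adj (f y) (f xj)" "grid_adj (f y) (f xi)" "grid_adj (f xj) (f x)" "grid_adj (f xi) (f x)"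
    using grid_adj_flip[OF cv(3) ij(1)] grid_adj_flip[OF cv(3) ij(2)] grid_adj_flip[OF cv(2) ij(2)]
      grid_adj_flip[OF cv(1) ij(1)]
    by (simp_all flip: flips)
  have "xj ! i \<noteq> xi ! i" "y ! i \<noteq> x ! i"
    using ij lx by (simp_all add: xi_def xj_def y_def nth_list_update)
  then have "f xj \<noteq> f xi" "f y \<noteq> f x"
    using inj_f cv x by (auto dest: inj_onD)
  then have square: "\<forall>p<length (f y). f x ! p = (if f xj ! p \<noteq> f y ! p then f xj ! p else f xi ! p)"
    using grid_square[OF adj] by blast
  have len: "length (f y) = length corner" "length (f x) = length corner"
    using points(3) grid_adj_length[OF adj(4)] grid_adj_length[OF adj(2)]
    by (auto simp: grid_point_def y_def)
  show ?thesis
    unfolding grid_point_def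
  proof (intro conjI allI impI)
    fix p assume "p < length corner" "p \<notin> axis ` {..<d}"
    then show "f x ! p = corner ! p" using points square len by (simp add: grid_point_def xi_def xj_def y_def)
  next
    fix l assume l: "l < d"
    then have "axis l < length corner" using f_unit_vertex(1) by blast
    moreover have "axis_value i \<noteq> corner ! axis i" using axis_value_neq ij by blast
    ultimately show "f x ! axis l = (if x ! l then axis_value l else corner ! axis l)"
      using points square len ij l lx by (auto simp: grid_point_def nth_list_update xi_def xj_def y_def)
  qed (use len in simp)
qed

lemma grid_point_f:
  assumes "x \<in> cube_vertices d"
  shows "grid_point x (f x)"
  using assms
proof (induction "card {i. i < d \<and> x ! i}" arbitrary: x rule: less_induct)
  case less
  define T where "T = {i. i < d \<and> x ! i}"
  have lx: "length x = d" using less.prems by (simp add: cube_vertices_def)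
  consider "T = {}" | i where "T = {i}" | i j where "i \<in> T" "j \<in> T" "i \<noteq> j"
    by (metis insertCI is_singletonI' is_singleton_the_elem)
  then show ?case
  proof cases
    case 1
    then have "x = replicate d False" using lx by (auto simp: T_def list_eq_iff_nth_eq)
    then show ?thesis using grid_point_corner by (simp add: corner_def)
  next
    case 2
    then have i: "i < d" by (auto simp: T_def)
    have "x = unit_vertex i"
    proof (rule nth_equalityI)
      fix l assume "l < length x"
      then have "x ! l \<longleftrightarrow> l \<in> T" using lx by (simp add: T_def)
      then show "x ! l = unit_vertex i ! l"
        using 2 i lx \<open>l < length x\<close> by (simp add: unit_vertex_def nth_list_update)
    qed (simp add: lx unit_vertex_def)
    with i show ?thesis using grid_point_unit_vertex by simp
  next
    case 3
    then have ij: "i < d" "j < d" "x ! i" "x ! j" by (auto simp: T_def)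
    have IH: "grid_point x' (f x')" if "x' \<in> cube_vertices d" "{l. l < d \<and> x' ! l} \<subset> T" for x'
      using less.hyps[OF _ that(1)] that(2) psubset_card_mono[of T] by (simp add: T_def)
    have "grid_point (x[i := False]) (f (x[i := False]))" "grid_point (x[j := False]) (f (x[j := False]))"
      "grid_point (x[i := False, j := False]) (f (x[i := False, j := False]))"
      using ij lx 3 by (intro IH; force simp: cube_vertices_def T_def nth_list_update)+
    then show ?thesis
      using grid_point_square[OF less.prems ij(1,2) \<open>i \<noteq> j\<close> ij(3,4)] by blast
  qed
qed

definition opposite :: "nat list" where
  "opposite = f (replicate d True)"

lemma grid_point_opposite: "grid_point (replicate d True) opposite"
  using grid_point_f by (simp add: opposite_def cube_vertices_def)

lemma opposite_nth:
  assumes "p < length corner"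
  shows "opposite ! p = corner ! p \<longleftrightarrow> p \<notin> axis ` {..<d}"
    and "opposite ! p = corner ! p \<or> opposite ! p = Suc (corner ! p) \<or> corner ! p = Suc (opposite ! p)"
proof -
  have "opposite ! axis i = axis_value i" if "i < d" for i
    using grid_point_opposite that by (simp add: grid_point_def)
  moreover have "opposite ! p = corner ! p" if "p \<notin> axis ` {..<d}"
    using grid_point_opposite assms that by (simp add: grid_point_def)
  ultimately show "opposite ! p = corner ! p \<longleftrightarrow> p \<notin> axis ` {..<d}"
    and "opposite ! p = corner ! p \<or> opposite ! p = Suc (corner ! p) \<or> corner ! p = Suc (opposite ! p)"
    using axis_value_neq f_unit_vertex(3) by (cases "p \<in> axis ` {..<d}"; force)+
qed

lemma grid_point_nth:
  "grid_point x z \<Longrightarrow> p < length corner \<Longrightarrow> z ! p = corner ! p \<or> z ! p = opposite ! p"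
  using grid_point_opposite unfolding grid_point_def by (cases "p \<in> axis ` {..<d}") auto

definition spanned_box :: "(nat \<times> nat) list" where
  "spanned_box = map2 (\<lambda>a c. (min a c, max a c)) corner opposite"

lemma length_opposite: "length opposite = length corner"
  using grid_point_opposite by (simp add: grid_point_def)

lemma length_spanned_box: "length spanned_box = length corner"
  by (simp add: spanned_box_def length_opposite)

lemma spanned_box_nth:
  "p < length corner \<Longrightarrow> spanned_box ! p = (min (corner ! p) (opposite ! p), max (corner ! p) (opposite ! p))"
  by (simp add: spanned_box_def length_opposite)

lemma unit_box_spanned_box: "unit_box spanned_box"
  unfolding unit_box_def
proof
  fix q assume "q \<in> set spanned_box"
  then obtain p where "p < length corner" "q = spanned_box ! p"
    using length_spanned_box by (metis in_set_conv_nth)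
  then show "case q of (l, u) \<Rightarrow> u = l \<or> u = Suc l"
    using opposite_nth(2) spanned_box_nth by fastforce
qed

lemma box_dim_spanned_box: "box_dim spanned_box = d"
proof -
  have "{p. p < length spanned_box \<and> (case spanned_box ! p of (l, u) \<Rightarrow> l \<noteq> u)}
      = {p. p < length corner \<and> opposite ! p \<noteq> corner ! p}"
    using length_spanned_box spanned_box_nth by (auto simp: min_def max_def split: if_split_asm)
  also have "\<dots> = axis ` {..<d}"
    using opposite_nth(1) f_unit_vertex(1) by blast
  finally show ?thesis
    unfolding box_dim_def length_filter_conv_card using card_image[OF inj_axis] by simp
qed

lemma image_subset_box_points: "f ` cube_vertices d \<subseteq> box_points spanned_box"
proof (rule image_subsetI)
  fix x assume "x \<in> cube_vertices d"
  then have x: "grid_point x (f x)" by (rule grid_point_f)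
  show "f x \<in> box_points spanned_box"
    unfolding box_points_def
  proof (intro CollectI conjI allI impI)
    show "length (f x) = length spanned_box" using x length_spanned_box by (simp add: grid_point_def)
    fix p assume "p < length spanned_box"
    then show "fst (spanned_box ! p) \<le> f x ! p" "f x ! p \<le> snd (spanned_box ! p)"
      using grid_point_nth[OF x, of p] length_spanned_box spanned_box_nth[of p] by auto
  qed
qed

lemma box_points_subset_image: "box_points spanned_box \<subseteq> f ` cube_vertices d"
proof
  fix z assume z: "z \<in> box_points spanned_box"
  have z_nth: "z ! p = corner ! p \<or> z ! p = opposite ! p" if "p < length corner" for p
  proof -
    have "min (corner ! p) (opposite ! p) \<le> z ! p \<and> z ! p \<le> max (corner ! p) (opposite ! p)"
      using z that length_spanned_box spanned_box_nth by (auto simp: box_points_def)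
    then show ?thesis using opposite_nth(2)[OF that] by auto
  qed
  define x where "x = map (\<lambda>i. z ! axis i \<noteq> corner ! axis i) [0..<d]"
  have "grid_point x z"
    unfolding grid_point_def
  proof (intro conjI allI impI)
    show "length z = length corner" using z length_spanned_box by (simp add: box_points_def)
  next
    fix i assume "i < d"
    then show "z ! axis i = (if x ! i then axis_value i else corner ! axis i)"
      using z_nth[of "axis i"] grid_point_opposite f_unit_vertex(1)[of i] by (auto simp: x_def grid_point_def)
  next
    fix p assume "p < length corner" "p \<notin> axis ` {..<d}"
    then show "z ! p = corner ! p" using z_nth opposite_nth(1) by metis
  qed
  moreover have "x \<in> cube_vertices d" by (simp add: x_def cube_vertices_def)
  ultimately show "z \<in> f ` cube_vertices d"
    using grid_point_f grid_point_unique by blast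
qed

end

lemma cube_embedding_grid_cube: "cube_embedding d h S grid_adj \<Longrightarrow> grid_cube d h"
  unfolding cube_embedding_def by unfold_locales (auto simp: bij_betw_def)

lemma induced_cube_is_box:
  assumes "cube_embedding d h S grid_adj"
  shows "\<exists>B. unit_box B \<and> box_dim B = d \<and> S = box_points B"
proof -
  interpret grid_cube d h using assms by (rule cube_embedding_grid_cube)
  have "S = h ` cube_vertices d" using assms by (simp add: cube_embedding_def bij_betw_def)
  then show ?thesis
    using unit_box_spanned_box box_dim_spanned_box image_subset_box_points box_points_subset_image by blast
qed

lemma num_induced_cubes_grid:
  assumes "W \<subseteq> {z. length z = n}"
  shows "num_induced_cubes W grid_adj d = card {B. unit_box B \<and> length B = n \<and> box_dim B = d \<and> box_points B \<subseteq> W}"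
proof -
  let ?boxes = "{B. unit_box B \<and> length B = n \<and> box_dim B = d \<and> box_points B \<subseteq> W}"
  let ?cubes = "{S. S \<subseteq> W \<and> (\<exists>h. cube_embedding d h S grid_adj)}"
  have "inj_on box_points ?boxes"
  proof (rule inj_onI)
    fix B B' assume "B \<in> ?boxes" "B' \<in> ?boxes" "box_points B = box_points B'"
    then show "B = B'" using box_points_inj unit_box_imp_le by blast
  qed
  moreover have "box_points ` ?boxes = ?cubes"
  proof (intro equalityI subsetI)
    fix S assume "S \<in> box_points ` ?boxes"
    then show "S \<in> ?cubes" using box_cube_embedding by auto
  next
    fix S assume "S \<in> ?cubes"
    then obtain h where h: "cube_embedding d h S grid_adj" and "S \<subseteq> W" by blast
    then obtain B where B: "unit_box B" "box_dim B = d" "S = box_points B"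
      using induced_cube_is_box by blast
    have "map fst B \<in> S"
      using B map_fst_in_box_points unit_box_imp_le by blast
    then have "length B = n" using \<open>S \<subseteq> W\<close> assms by (auto simp: box_points_def)
    then show "S \<in> box_points ` ?boxes" using B \<open>S \<subseteq> W\<close> by auto
  qed
  ultimately have "bij_betw box_points ?boxes ?cubes" by (simp add: bij_betw_def)
  then show ?thesis
    unfolding num_induced_cubes_altdef by (simp add: bij_betw_same_card)
qed

section \<open>Pell strings as a subgraph of the grid\<close>

definition digit_move :: "nat \<Rightarrow> nat list \<Rightarrow> nat list \<Rightarrow> bool" where
  "digit_move k u v \<longleftrightarrow> (\<exists>j<length u. u ! j + 2 \<le> k \<and> v = u[j := Suc (u ! j)])"

definition block_move :: "nat \<Rightarrow> nat list \<Rightarrow> nat list \<Rightarrow> bool" where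
  "block_move k u v \<longleftrightarrow> (\<exists>j. Suc j < length u \<and> u ! j = k - 1 \<and> u ! Suc j = k - 1 \<and> v = u[j := k, Suc j := k])"

lemma digit_move_iff_update:
  "length u = length v \<and> (\<exists>j<length u. \<exists>i. i + 2 \<le> k \<and> u ! j = i \<and> v ! j = i + 1 \<and>
       (\<forall>l<length u. l \<noteq> j \<longrightarrow> u ! l = v ! l))
   \<longleftrightarrow> digit_move k u v"
  by (auto simp: digit_move_def list_eq_iff_nth_eq nth_list_update)

lemma block_move_iff_update:
  "length u = length v \<and> (\<exists>j. j + 1 < length u \<and> u ! j = k - 1 \<and> u ! (j + 1) = k - 1 \<and>
       v ! j = k \<and> v ! (j + 1) = k \<and> (\<forall>l<length u. l \<noteq> j \<longrightarrow> l \<noteq> j + 1 \<longrightarrow> u ! l = v ! l))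
   \<longleftrightarrow> block_move k u v"
  unfolding block_move_def
proof
  assume "length u = length v \<and> (\<exists>j. j + 1 < length u \<and> u ! j = k - 1 \<and> u ! (j + 1) = k - 1 \<and>
       v ! j = k \<and> v ! (j + 1) = k \<and> (\<forall>l<length u. l \<noteq> j \<longrightarrow> l \<noteq> j + 1 \<longrightarrow> u ! l = v ! l))"
  then obtain j where "length u = length v" "Suc j < length u" "u ! j = k - 1" "u ! Suc j = k - 1"
    "v ! j = k" "v ! Suc j = k" "\<forall>l<length u. l \<noteq> j \<longrightarrow> l \<noteq> Suc j \<longrightarrow> u ! l = v ! l"
    by auto
  moreover from this have "v = u[j := k, Suc j := k]"
    by (auto simp: list_eq_iff_nth_eq nth_list_update)
  ultimately show "\<exists>j. Suc j < length u \<and> u ! j = k - 1 \<and> u ! Suc j = k - 1 \<and> v = u[j := k, Suc j := k]"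
    by blast
next
  assume "\<exists>j. Suc j < length u \<and> u ! j = k - 1 \<and> u ! Suc j = k - 1 \<and> v = u[j := k, Suc j := k]"
  then show "length u = length v \<and> (\<exists>j. j + 1 < length u \<and> u ! j = k - 1 \<and> u ! (j + 1) = k - 1 \<and>
       v ! j = k \<and> v ! (j + 1) = k \<and> (\<forall>l<length u. l \<noteq> j \<longrightarrow> l \<noteq> j + 1 \<longrightarrow> u ! l = v ! l))"
    by (auto simp: nth_list_update)
qed

lemma ex_nat_split: "(\<exists>j. P j) \<longleftrightarrow> P 0 \<or> (\<exists>j. P (Suc j))"
  by (metis not0_implies_Suc)

lemma pell_move_iff: "pell_move k u v \<longleftrightarrow> digit_move k u v \<or> block_move k u v"
  unfolding pell_move_def digit_move_iff_update[symmetric] block_move_iff_update[symmetric] by blast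

lemma digit_move_Cons:
  "digit_move k (a # u) (b # v) \<longleftrightarrow> (b = Suc a \<and> a + 2 \<le> k \<and> u = v) \<or> (a = b \<and> digit_move k u v)"
  by (auto simp: digit_move_def Ex_less_Suc2)

lemma block_move_Cons:
  "block_move k (a # u) (b # v) \<longleftrightarrow>
     (a = k - 1 \<and> b = k \<and> (\<exists>r. u = (k - 1) # r \<and> v = k # r)) \<or> (a = b \<and> block_move k u v)"
proof -
  have "block_move k (a # u) (b # v) \<longleftrightarrow>
     (0 < length u \<and> a = k - 1 \<and> u ! 0 = k - 1 \<and> b # v = k # u[0 := k]) \<or> (a = b \<and> block_move k u v)"
    unfolding block_move_def by (subst ex_nat_split) auto
  also have "\<dots> \<longleftrightarrow> (a = k - 1 \<and> b = k \<and> (\<exists>r. u = (k - 1) # r \<and> v = k # r)) \<or> (a = b \<and> block_move k u v)"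
    by (cases u) auto
  finally show ?thesis .
qed

lemma pell_move_Cons:
  "pell_move k (a # u) (b # v) \<longleftrightarrow> (a = b \<and> pell_move k u v) \<or> (b = Suc a \<and> a + 2 \<le> k \<and> u = v) \<or>
     (a = k - 1 \<and> b = k \<and> (\<exists>r. u = (k - 1) # r \<and> v = k # r))"
  unfolding pell_move_iff digit_move_Cons block_move_Cons by blast

fun pell_code :: "nat \<Rightarrow> nat list \<Rightarrow> nat list" where
  "pell_code k [] = []"
| "pell_code k [a] = [a]"
| "pell_code k (a # b # w) = (if a = k then k # (k - 1) # pell_code k w else a # pell_code k (b # w))"

inductive pell_coded :: "nat \<Rightarrow> nat list \<Rightarrow> bool" for k where
  "pell_coded k []"
| "a < k \<Longrightarrow> pell_coded k z \<Longrightarrow> pell_coded k (a # z)"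
| "pell_coded k z \<Longrightarrow> pell_coded k (k # (k - 1) # z)"

lemma pell_code_digit [simp]: "a < k \<Longrightarrow> pell_code k (a # w) = a # pell_code k w"
  by (cases w) auto

lemma length_pell_code: "pell_string k w \<Longrightarrow> length (pell_code k w) = length w"
  by (induction rule: pell_string.induct) auto

lemma pell_coded_pell_code: "pell_string k w \<Longrightarrow> pell_coded k (pell_code k w)"
proof (induction rule: pell_string.induct)
  case (pell_kk w)
  then show ?case using pell_coded.intros(3)[of k "pell_code k w"] by simp
qed (auto intro: pell_coded.intros)

lemma pell_coded_imp_pell_code: "pell_coded k z \<Longrightarrow> \<exists>w. pell_string k w \<and> pell_code k w = z"
proof (induction rule: pell_coded.induct)
  case 1
  then show ?case by (auto intro: pell_string.intros)
next
  case (2 a z)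
  then obtain w where "pell_string k w" "pell_code k w = z" by blast
  with 2 show ?case by (intro exI[of _ "a # w"]) (auto intro: pell_string.intros)
next
  case (3 z)
  then obtain w where "pell_string k w" "pell_code k w = z" by blast
  then show ?case by (intro exI[of _ "k # k # w"]) (auto intro: pell_string.intros)
qed

lemma pell_code_inj:
  "pell_string k u \<Longrightarrow> pell_string k v \<Longrightarrow> pell_code k u = pell_code k v \<Longrightarrow> u = v"
proof (induction arbitrary: v rule: pell_string.induct)
  case pell_nil
  then show ?case by (cases rule: pell_string.cases) auto
next
  case (pell_digit a w)
  from pell_digit.prems show ?case
    by (cases rule: pell_string.cases) (use pell_digit in auto)
next
  case (pell_kk w)
  from pell_kk.prems show ?case
    by (cases rule: pell_string.cases) (use pell_kk in auto)
qed

lemma bij_betw_pell_code: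
  "bij_betw (pell_code k) (pell_vertices n k) {z. length z = n \<and> pell_coded k z}"
proof -
  have "inj_on (pell_code k) (pell_vertices n k)"
    using pell_code_inj by (auto simp: inj_on_def pell_vertices_def)
  moreover have "pell_code k ` pell_vertices n k = {z. length z = n \<and> pell_coded k z}"
    using pell_coded_imp_pell_code length_pell_code pell_coded_pell_code
    by (fastforce simp: pell_vertices_def)
  ultimately show ?thesis by (simp add: bij_betw_def)
qed

lemma pell_code_eq_Cons_iff:
  assumes "k \<ge> 1" "pell_string k u" "pell_string k v"
  shows "pell_code k u = (k - 1) # pell_code k v \<longleftrightarrow> u = (k - 1) # v"
proof
  assume "pell_code k u = (k - 1) # pell_code k v"
  moreover have "pell_string k ((k - 1) # v)" "pell_code k ((k - 1) # v) = (k - 1) # pell_code k v"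
    using assms by (auto intro: pell_string.intros)
  ultimately show "u = (k - 1) # v" using pell_code_inj assms(2) by metis
qed (use assms in simp)

lemma pell_move_digit_block:
  assumes k: "k \<ge> 2" and "a < k" "pell_string k w" "pell_string k w'"
  shows "(pell_move k (a # w) (k # k # w') \<or> pell_move k (k # k # w') (a # w)) \<longleftrightarrow>
    grid_adj (pell_code k (a # w)) (pell_code k (k # k # w'))"
proof -
  have "pell_move k (a # w) (k # k # w') \<longleftrightarrow> a = k - 1 \<and> w = (k - 1) # w'"
    using assms by (auto simp: pell_move_Cons)
  moreover have "\<not> pell_move k (k # k # w') (a # w)"
    using assms by (auto simp: pell_move_Cons)
  moreover have "grid_adj (pell_code k (a # w)) (pell_code k (k # k # w')) \<longleftrightarrow>
      a = k - 1 \<and> pell_code k w = (k - 1) # pell_code k w'"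
    using assms by auto
  moreover have "k \<ge> 1" using k by simp
  ultimately show ?thesis using pell_code_eq_Cons_iff assms by blast
qed

lemma pell_move_digit_digit:
  assumes "a < k" "b < k" "pell_string k w" "pell_string k w'"
    and IH: "(pell_move k w w' \<or> pell_move k w' w) \<longleftrightarrow> grid_adj (pell_code k w) (pell_code k w')"
  shows "(pell_move k (a # w) (b # w') \<or> pell_move k (b # w') (a # w)) \<longleftrightarrow>
    grid_adj (pell_code k (a # w)) (pell_code k (b # w'))"
proof -
  have "pell_move k (a # w) (b # w') \<longleftrightarrow> (a = b \<and> pell_move k w w') \<or> (b = Suc a \<and> w = w')"
    and "pell_move k (b # w') (a # w) \<longleftrightarrow> (a = b \<and> pell_move k w' w) \<or> (a = Suc b \<and> w = w')"
    using assms(1,2) by (auto simp: pell_move_Cons)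
  moreover have "grid_adj (pell_code k (a # w)) (pell_code k (b # w')) \<longleftrightarrow>
      (a = b \<and> grid_adj (pell_code k w) (pell_code k w')) \<or> ((a = Suc b \<or> b = Suc a) \<and> pell_code k w = pell_code k w')"
    using assms(1,2) by simp
  moreover have "pell_code k w = pell_code k w' \<longleftrightarrow> w = w'"
    using pell_code_inj[of k w w'] assms(1,3,4) by auto
  ultimately show ?thesis using IH by blast
qed

lemma pell_move_iff_grid_adj:
  assumes k: "k \<ge> 2"
  shows "pell_string k u \<Longrightarrow> pell_string k v \<Longrightarrow>
    (pell_move k u v \<or> pell_move k v u) \<longleftrightarrow> grid_adj (pell_code k u) (pell_code k v)"
proof (induction arbitrary: v rule: pell_string.induct)
  case pell_nil
  then show ?case by (simp add: pell_move_def)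
next
  case (pell_digit a w)
  note a = pell_digit.hyps and IH = pell_digit.IH
  from pell_digit.prems show ?case
  proof (cases rule: pell_string.cases)
    case pell_nil
    then show ?thesis by (simp add: pell_move_def)
  next
    case (pell_digit b w')
    then show ?thesis using pell_move_digit_digit[OF a(1) \<open>b < k\<close> a(2)] IH by simp
  next
    case (pell_kk w')
    then show ?thesis using pell_move_digit_block[OF k] pell_digit.hyps by blast
  qed
next
  case (pell_kk w)
  from pell_kk.prems show ?case
  proof (cases rule: pell_string.cases)
    case pell_nil
    then show ?thesis by (simp add: pell_move_def)
  next
    case (pell_digit b w')
    then show ?thesis using pell_move_digit_block[OF k, of b w' w] pell_kk.hyps grid_adj_sym by blast
  next
    case (pell_kk w')
    have "pell_move k (k # k # w) (k # k # w') \<longleftrightarrow> pell_move k w w'"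
      and "pell_move k (k # k # w') (k # k # w) \<longleftrightarrow> pell_move k w' w"
      using k by (auto simp: pell_move_Cons)
    then show ?thesis
      unfolding \<open>v = k # k # w'\<close> using pell_kk.IH \<open>pell_string k w'\<close> by simp
  qed
qed

lemma pell_adj_iff_grid_adj:
  assumes "k \<ge> 2" "u \<in> pell_vertices n k" "v \<in> pell_vertices n k"
  shows "pell_adj n k u v \<longleftrightarrow> grid_adj (pell_code k u) (pell_code k v)"
  using assms pell_move_iff_grid_adj[of k u v] unfolding pell_adj_def pell_vertices_def by auto

lemma num_induced_cubes_pell_grid:
  assumes "k \<ge> 2"
  shows "num_induced_cubes (pell_vertices n k) (pell_adj n k) d =
    num_induced_cubes {z. length z = n \<and> pell_coded k z} grid_adj d"
  by (rule num_induced_cubes_iso[OF bij_betw_pell_code]) (rule pell_adj_iff_grid_adj[OF assms])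

lemma pell_coded_Cons_digit: "a < k \<Longrightarrow> pell_coded k (a # z) \<longleftrightarrow> pell_coded k z"
  by (auto elim: pell_coded.cases intro: pell_coded.intros(2))

lemma pell_coded_Cons_top:
  "pell_coded k (k # z) \<longleftrightarrow> (\<exists>z'. z = (k - 1) # z' \<and> pell_coded k z')"
proof
  assume "pell_coded k (k # z)"
  then show "\<exists>z'. z = (k - 1) # z' \<and> pell_coded k z'"
    by (cases rule: pell_coded.cases) auto
qed (metis pell_coded.intros(3))

lemma pell_coded_Cons_gt: "k < a \<Longrightarrow> \<not> pell_coded k (a # z)"
  by (auto elim: pell_coded.cases)

lemma pell_coded_singleton: "pell_coded k [a] \<longleftrightarrow> a < k"
  using pell_coded_Cons_digit pell_coded_Cons_top pell_coded_Cons_gt pell_coded.intros(1)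
  by (metis linorder_neqE_nat list.distinct(1))

definition digit_intervals :: "nat \<Rightarrow> (nat \<times> nat) set" where
  "digit_intervals k = {(l, u). u < k \<and> (u = l \<or> u = Suc l)}"

definition top_intervals :: "nat \<Rightarrow> (nat \<times> nat) set" where
  "top_intervals k = {(k - 1, k), (k, k)}"

lemma finite_digit_intervals: "finite (digit_intervals k)"
  by (rule finite_subset[of _ "{..<k} \<times> {..<k}"]) (auto simp: digit_intervals_def)

inductive pell_box :: "nat \<Rightarrow> (nat \<times> nat) list \<Rightarrow> bool" for k where
  "pell_box k []"
| "q \<in> digit_intervals k \<Longrightarrow> pell_box k B \<Longrightarrow> pell_box k (q # B)"
| "q \<in> top_intervals k \<Longrightarrow> pell_box k B \<Longrightarrow> pell_box k (q # (k - 1, k - 1) # B)"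

lemma pell_box_imp_unit_box: "pell_box k B \<Longrightarrow> unit_box B"
  by (induction rule: pell_box.induct) (auto simp: unit_box_def digit_intervals_def top_intervals_def)

lemma pell_box_imp_box_points_subset:
  "pell_box k B \<Longrightarrow> box_points B \<subseteq> {z. pell_coded k z}"
proof (induction rule: pell_box.induct)
  case 1
  then show ?case by (auto intro: pell_coded.intros)
next
  case (2 q B)
  then show ?case
    by (fastforce simp: digit_intervals_def box_points_Cons pell_coded_Cons_digit)
next
  case (3 q B)
  have "pell_coded k (a # (k - 1) # z)" if "k - 1 \<le> a" "a \<le> k" "pell_coded k z" for a z
    using that by (cases "a = k") (auto simp: pell_coded_Cons_digit pell_coded_Cons_top)
  with 3 show ?case
    by (fastforce simp: top_intervals_def box_points_Cons)
qed

lemma box_points_subset_digit: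
  assumes "box_points ((l, u) # B) \<subseteq> {z. pell_coded k z}" "l \<le> u" "u < k"
  shows "box_points B \<subseteq> {z. pell_coded k z}"
proof
  fix z assume "z \<in> box_points B"
  then have "u # z \<in> box_points ((l, u) # B)" using assms(2) by simp
  then show "z \<in> {z. pell_coded k z}" using assms(1,3) pell_coded_Cons_digit by blast
qed

lemma box_points_subset_top:
  assumes k: "k \<ge> 2" and sub: "box_points ((l, u) # (l2, u2) # B) \<subseteq> {z. pell_coded k z}"
    and le: "l \<le> u" "l2 \<le> u2" "\<forall>(l, u) \<in> set B. l \<le> u" and "k \<le> u"
  shows "u = k" "l2 = k - 1" "u2 = k - 1" "box_points B \<subseteq> {z. pell_coded k z}"
proof -
  have coded: "pell_coded k (a # b # z)" if "l \<le> a" "a \<le> u" "l2 \<le> b" "b \<le> u2" "z \<in> box_points B" for a b z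
  proof -
    have "a # b # z \<in> box_points ((l, u) # (l2, u2) # B)" using that by simp
    then show ?thesis using sub by blast
  qed
  have "pell_coded k (u # l2 # map fst B)" "pell_coded k (u # u2 # map fst B)"
    using coded le map_fst_in_box_points by auto
  then show u: "u = k" and l2: "l2 = k - 1" and u2: "u2 = k - 1"
    using \<open>k \<le> u\<close> k pell_coded_Cons_gt pell_coded_Cons_top
    by (metis le_neq_implies_less not_le list.inject one_le_numeral order_trans)+
  show "box_points B \<subseteq> {z. pell_coded k z}"
    using coded[of k "k - 1"] u l2 u2 le k pell_coded_Cons_top by fastforce
qed

lemma box_points_subset_imp_pell_box:
  assumes k: "k \<ge> 2"
  shows "unit_box B \<Longrightarrow> box_points B \<subseteq> {z. pell_coded k z} \<Longrightarrow> pell_box k B"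
proof (induction B rule: induct_list012)
  case 1
  show ?case by (rule pell_box.intros(1))
next
  case (2 q)
  obtain l u where q: "q = (l, u)" by (cases q)
  have unit: "u = l \<or> u = Suc l" using "2.prems"(1) q by (auto simp: unit_box_def)
  then have "[u] \<in> box_points [q]" using q by auto
  then have "pell_coded k [u]" using "2.prems"(2) by blast
  then have "q \<in> digit_intervals k"
    using pell_coded_singleton k q unit by (auto simp: digit_intervals_def)
  then show ?case by (intro pell_box.intros)
next
  case (3 q q2 B)
  obtain l u l2 u2 where q: "q = (l, u)" and q2: "q2 = (l2, u2)" by (cases q, cases q2)
  have unit: "u = l \<or> u = Suc l" "u2 = l2 \<or> u2 = Suc l2" "unit_box B" "unit_box (q2 # B)"
    using "3.prems"(1) q q2 by (auto simp: unit_box_def)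
  show ?case
  proof (cases "u < k")
    case True
    have "l \<le> u" using unit(1) by auto
    then have "box_points (q2 # B) \<subseteq> {z. pell_coded k z}"
      using box_points_subset_digit[of l u "q2 # B" k] "3.prems"(2) q True by blast
    then have "pell_box k (q2 # B)" using "3.IH"(2) unit(4) by blast
    moreover have "q \<in> digit_intervals k" using True q unit by (auto simp: digit_intervals_def)
    ultimately show ?thesis by (rule pell_box.intros(2)[rotated])
  next
    case False
    have "box_points ((l, u) # (l2, u2) # B) \<subseteq> {z. pell_coded k z}" using "3.prems"(2) q q2 by simp
    moreover have "l \<le> u" "l2 \<le> u2" using unit(1,2) by auto
    moreover have "\<forall>(l, u) \<in> set B. l \<le> u" using unit(3) by (rule unit_box_imp_le)
    ultimately have "u = k" "l2 = k - 1" "u2 = k - 1" "box_points B \<subseteq> {z. pell_coded k z}"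
      using box_points_subset_top[OF k] False by (simp_all add: not_less)
    then have "pell_box k B" "q \<in> top_intervals k"
      using "3.IH"(1) unit q k by (auto simp: top_intervals_def)
    then show ?thesis using pell_box.intros(3)[of q k B] q2 \<open>l2 = k - 1\<close> \<open>u2 = k - 1\<close> by simp
  qed
qed

lemma num_induced_cubes_pell:
  assumes "k \<ge> 2"
  shows "num_induced_cubes (pell_vertices n k) (pell_adj n k) d = card {B. pell_box k B \<and> length B = n \<and> box_dim B = d}"
proof -
  have "num_induced_cubes (pell_vertices n k) (pell_adj n k) d
      = card {B. unit_box B \<and> length B = n \<and> box_dim B = d \<and> box_points B \<subseteq> {z. length z = n \<and> pell_coded k z}}"
    unfolding num_induced_cubes_pell_grid[OF assms] by (rule num_induced_cubes_grid) blast
  also have "{B. unit_box B \<and> length B = n \<and> box_dim B = d \<and> box_points B \<subseteq> {z. length z = n \<and> pell_coded k z}}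
      = {B. pell_box k B \<and> length B = n \<and> box_dim B = d}"
  proof (rule Collect_cong)
    fix B
    have "box_points B \<subseteq> {z. length z = n \<and> pell_coded k z} \<longleftrightarrow> box_points B \<subseteq> {z. pell_coded k z}"
      if "length B = n" using that by (auto simp: box_points_def)
    then show "(unit_box B \<and> length B = n \<and> box_dim B = d \<and> box_points B \<subseteq> {z. length z = n \<and> pell_coded k z})
        \<longleftrightarrow> (pell_box k B \<and> length B = n \<and> box_dim B = d)"
      using pell_box_imp_unit_box[of k B] pell_box_imp_box_points_subset[of k B]
        box_points_subset_imp_pell_box[OF assms, of B] by blast
  qed
  finally show ?thesis .
qed

section \<open>Fibonacci-type sums\<close>

definition fib_term :: "'a::comm_semiring_1 \<Rightarrow> 'a \<Rightarrow> nat \<Rightarrow> nat \<Rightarrow> 'a" where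
  "fib_term A B n i = of_nat ((n - i) choose i) * (A ^ (n - 2 * i) * B ^ i)"

definition fib_sum :: "'a::comm_semiring_1 \<Rightarrow> 'a \<Rightarrow> nat \<Rightarrow> 'a" where
  "fib_sum A B n = (\<Sum>i\<le>n div 2. fib_term A B n i)"

lemma fib_term_eq_0: "n div 2 < i \<Longrightarrow> fib_term A B n i = 0"
  unfolding fib_term_def by (subst binomial_eq_0) auto

lemma fib_sum_atMost: "n \<le> m \<Longrightarrow> fib_sum A B n = (\<Sum>i\<le>m. fib_term A B n i)"
  unfolding fib_sum_def by (rule sum.mono_neutral_left) (auto simp: fib_term_eq_0)

(* Pascal's rule for (n + 1 - j) choose (j + 1). *)
lemma fib_term_Suc_Suc:
  "fib_term A B (Suc (Suc n)) i = A * fib_term A B (Suc n) i + (if i = 0 then 0 else B * fib_term A B n (i - 1))"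
proof (cases i)
  case 0
  then show ?thesis by (simp add: fib_term_def)
next
  case (Suc j)
  show ?thesis
  proof (cases "j \<le> n")
    case False
    then show ?thesis using Suc by (cases j) (simp_all add: fib_term_def)
  next
    case True
    have "of_nat ((n - j) choose Suc j) * (A ^ (n - 2 * j) * B ^ Suc j)
        = A * (of_nat ((n - j) choose Suc j) * (A ^ (Suc n - 2 * Suc j) * B ^ Suc j))"
    proof (cases "Suc (2 * j) \<le> n")
      case True
      then have "n - 2 * j = Suc (Suc n - 2 * Suc j)" by simp
      then show ?thesis by (simp add: algebra_simps)
    qed (simp add: binomial_eq_0)
    moreover have "Suc (n - j) choose Suc j = (n - j choose j) + (n - j choose Suc j)" by simp
    moreover have "Suc (Suc n) - i = Suc (n - j)" "Suc n - i = n - j" "n - (i - 1) = n - j"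
      "Suc (Suc n) - 2 * i = n - 2 * j" "n - 2 * (i - 1) = n - 2 * j"
      using Suc True by auto
    ultimately show ?thesis unfolding fib_term_def using Suc by (simp add: algebra_simps)
  qed
qed

lemma fib_sum_0 [simp]: "fib_sum A B 0 = 1"
  by (simp add: fib_sum_def fib_term_def)

lemma fib_sum_Suc_0 [simp]: "fib_sum A B (Suc 0) = A"
  by (simp add: fib_sum_def fib_term_def)

lemma fib_sum_Suc_Suc: "fib_sum A B (Suc (Suc n)) = A * fib_sum A B (Suc n) + B * fib_sum A B n"
proof -
  have "fib_sum A B (Suc (Suc n)) =
      (\<Sum>i\<le>Suc (Suc n). A * fib_term A B (Suc n) i) + (\<Sum>i\<le>Suc (Suc n). if i = 0 then 0 else B * fib_term A B n (i - 1))"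
    by (simp add: fib_sum_atMost[of _ "Suc (Suc n)"] fib_term_Suc_Suc sum.distrib)
  also have "(\<Sum>i\<le>Suc (Suc n). A * fib_term A B (Suc n) i) = A * fib_sum A B (Suc n)"
    by (simp add: fib_sum_atMost[of _ "Suc (Suc n)"] sum_distrib_left del: sum.atMost_Suc)
  also have "(\<Sum>i\<le>Suc (Suc n). if i = 0 then 0 else B * fib_term A B n (i - 1)) = B * fib_sum A B n"
    by (simp add: sum.atMost_Suc_shift fib_sum_atMost[of _ "Suc n"] sum_distrib_left distrib_left
        del: sum.atMost_Suc)
  finally show ?thesis .
qed

lemma fib_sum_unique:
  assumes "P 0 = 1" "P 1 = A" "\<And>n. P (Suc (Suc n)) = A * P (Suc n) + B * P n"
  shows "P n = fib_sum A B n"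
proof -
  have "P n = fib_sum A B n \<and> P (Suc n) = fib_sum A B (Suc n)"
  proof (induction n)
    case 0
    show ?case using assms(1,2) by simp
  next
    case (Suc n)
    then show ?case by (simp add: assms(3) fib_sum_Suc_Suc)
  qed
  then show ?thesis ..
qed

lemma degree_fib_sum:
  fixes A B :: "'a::idom poly"
  assumes "degree A = 1" "degree B \<le> 1"
  shows "degree (fib_sum A B n) = n"
proof -
  have "degree (fib_sum A B n) = n \<and> degree (fib_sum A B (Suc n)) = Suc n"
  proof (induction n)
    case 0
    then show ?case using assms by simp
  next
    case (Suc n)
    have "fib_sum A B (Suc n) \<noteq> 0" "A \<noteq> 0" using Suc assms by auto
    then have "degree (A * fib_sum A B (Suc n)) = Suc (Suc n)"
      using Suc assms by (simp add: degree_mult_eq)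
    moreover have "degree (B * fib_sum A B n) < Suc (Suc n)"
      using Suc assms degree_mult_le[of B "fib_sum A B n"] by simp
    ultimately show ?case
      using Suc by (simp add: fib_sum_Suc_Suc degree_add_eq_left)
  qed
  then show ?thesis ..
qed

section \<open>Counting the boxes\<close>

definition pell_boxes :: "nat \<Rightarrow> nat \<Rightarrow> (nat \<times> nat) list set" where
  "pell_boxes k n = {B. pell_box k B \<and> length B = n}"

definition pell_box_poly :: "nat \<Rightarrow> nat \<Rightarrow> int poly" where
  "pell_box_poly k n = (\<Sum>B\<in>pell_boxes k n. [:0, 1:] ^ box_dim B)"

lemma pell_box_le: "pell_box k B \<Longrightarrow> set B \<subseteq> {..k} \<times> {..k}"
  by (induction rule: pell_box.induct) (auto simp: digit_intervals_def top_intervals_def)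

lemma finite_pell_boxes: "finite (pell_boxes k n)"
proof (rule finite_subset)
  show "pell_boxes k n \<subseteq> {B. set B \<subseteq> {..k} \<times> {..k} \<and> length B = n}"
    using pell_box_le by (auto simp: pell_boxes_def)
qed (rule finite_lists_length_eq, simp)

lemma pell_boxes_0: "pell_boxes k 0 = {[]}"
  by (auto simp: pell_boxes_def intro: pell_box.intros)

lemma pell_boxes_1: "pell_boxes k 1 = (\<lambda>q. [q]) ` digit_intervals k"
  by (auto simp: pell_boxes_def length_Suc_conv elim: pell_box.cases intro: pell_box.intros)

lemma pell_box_Cons_Cons_iff:
  "pell_box k (q # q2 # B) \<longleftrightarrow>
     (q \<in> digit_intervals k \<and> pell_box k (q2 # B)) \<or> (q \<in> top_intervals k \<and> q2 = (k - 1, k - 1) \<and> pell_box k B)"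
proof
  assume "pell_box k (q # q2 # B)"
  then show "(q \<in> digit_intervals k \<and> pell_box k (q2 # B)) \<or> (q \<in> top_intervals k \<and> q2 = (k - 1, k - 1) \<and> pell_box k B)"
    by (cases rule: pell_box.cases) auto
qed (metis pell_box.intros(2,3))

lemma pell_boxes_Suc_Suc:
  "pell_boxes k (Suc (Suc n)) =
     (\<lambda>(q, B). q # B) ` (digit_intervals k \<times> pell_boxes k (Suc n)) \<union>
     (\<lambda>(q, B). q # B) ` (top_intervals k \<times> Cons (k - 1, k - 1) ` pell_boxes k n)"
proof (intro equalityI subsetI)
  fix B assume "B \<in> pell_boxes k (Suc (Suc n))"
  then obtain q q2 B' where "B = q # q2 # B'" "length B' = n" "pell_box k (q # q2 # B')"
    by (auto simp: pell_boxes_def length_Suc_conv)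
  then show "B \<in> (\<lambda>(q, B). q # B) ` (digit_intervals k \<times> pell_boxes k (Suc n)) \<union>
     (\<lambda>(q, B). q # B) ` (top_intervals k \<times> Cons (k - 1, k - 1) ` pell_boxes k n)"
    unfolding pell_box_Cons_Cons_iff by (force simp: pell_boxes_def)
next
  fix B assume "B \<in> (\<lambda>(q, B). q # B) ` (digit_intervals k \<times> pell_boxes k (Suc n)) \<union>
     (\<lambda>(q, B). q # B) ` (top_intervals k \<times> Cons (k - 1, k - 1) ` pell_boxes k n)"
  then show "B \<in> pell_boxes k (Suc (Suc n))"
    by (auto simp: pell_boxes_def pell_box_Cons_Cons_iff intro: pell_box.intros(2))
qed

lemma sum_power_box_dim_Cons:
  fixes x :: "'a::comm_semiring_1"
  shows "(\<Sum>B\<in>(\<lambda>(q, B). q # B) ` (Q \<times> A). x ^ box_dim B) =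
    (\<Sum>q\<in>Q. x ^ box_dim [q]) * (\<Sum>B\<in>A. x ^ box_dim B)"
proof -
  have "(\<Sum>B\<in>(\<lambda>(q, B). q # B) ` (Q \<times> A). x ^ box_dim B) = (\<Sum>(q, B)\<in>Q \<times> A. x ^ box_dim (q # B))"
    by (subst sum.reindex) (auto simp: inj_on_def case_prod_beta)
  also have "\<dots> = (\<Sum>(q, B)\<in>Q \<times> A. x ^ box_dim [q] * x ^ box_dim B)"
    by (subst box_dim_Cons) (simp add: power_add)
  also have "\<dots> = (\<Sum>q\<in>Q. x ^ box_dim [q]) * (\<Sum>B\<in>A. x ^ box_dim B)"
    by (simp add: sum_product sum.cartesian_product)
  finally show ?thesis .
qed

lemma sum_digit_intervals:
  assumes "k \<ge> 1"
  shows "(\<Sum>q\<in>digit_intervals k. [:0, 1:] ^ box_dim [q]) = [:int k, int k - 1:]"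
proof -
  have "digit_intervals k = (\<lambda>a. (a, a)) ` {..<k} \<union> (\<lambda>a. (a, Suc a)) ` {..<k - 1}"
    by (auto simp: digit_intervals_def)
  moreover have "(\<lambda>a. (a, a)) ` {..<k} \<inter> (\<lambda>a. (a, Suc a)) ` {..<k - 1} = {}" by auto
  ultimately have "(\<Sum>q\<in>digit_intervals k. [:0, 1:] ^ box_dim [q]) =
      (\<Sum>q\<in>(\<lambda>a. (a, a)) ` {..<k}. [:0, 1:] ^ box_dim [q]) + (\<Sum>q\<in>(\<lambda>a. (a, Suc a)) ` {..<k - 1}. [:0, 1:] ^ box_dim [q])"
    by (simp add: sum.union_disjoint)
  also have "\<dots> = of_nat k + of_nat (k - 1) * [:0, 1:]"
    by (simp add: sum.reindex inj_on_def box_dim_def)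
  also have "\<dots> = [:int k, int k - 1:]"
    using assms by (simp add: of_nat_poly of_nat_diff)
  finally show ?thesis .
qed

lemma sum_top_intervals:
  assumes "k \<ge> 1"
  shows "(\<Sum>q\<in>top_intervals k. [:0, 1:] ^ box_dim [q]) = [:1, 1:]"
  using assms by (simp add: top_intervals_def box_dim_def one_pCons)

lemma pell_box_poly_0: "pell_box_poly k 0 = 1"
  by (simp add: pell_box_poly_def pell_boxes_0 box_dim_def)

lemma pell_box_poly_1: "k \<ge> 1 \<Longrightarrow> pell_box_poly k 1 = [:int k, int k - 1:]"
  unfolding pell_box_poly_def pell_boxes_1 by (subst sum.reindex) (simp_all add: inj_on_def sum_digit_intervals)

lemma pell_box_poly_Suc_Suc:
  assumes "k \<ge> 1"
  shows "pell_box_poly k (Suc (Suc n)) = [:int k, int k - 1:] * pell_box_poly k (Suc n) + [:1, 1:] * pell_box_poly k n"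
proof -
  let ?D = "(\<lambda>(q, B). q # B) ` (digit_intervals k \<times> pell_boxes k (Suc n))"
  let ?T = "(\<lambda>(q, B). q # B) ` (top_intervals k \<times> Cons (k - 1, k - 1) ` pell_boxes k n)"
  have "finite ?D" "finite ?T"
    using finite_digit_intervals finite_pell_boxes by (auto simp: top_intervals_def)
  moreover have "?D \<inter> ?T = {}"
    by (auto simp: digit_intervals_def top_intervals_def)
  ultimately have "pell_box_poly k (Suc (Suc n)) = (\<Sum>B\<in>?D. [:0, 1:] ^ box_dim B) + (\<Sum>B\<in>?T. [:0, 1:] ^ box_dim B)"
    unfolding pell_box_poly_def pell_boxes_Suc_Suc by (rule sum.union_disjoint)
  also have "(\<Sum>B\<in>?D. [:0, 1:] ^ box_dim B) = [:int k, int k - 1:] * pell_box_poly k (Suc n)"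
    using assms by (simp add: sum_power_box_dim_Cons sum_digit_intervals pell_box_poly_def)
  also have "(\<Sum>B\<in>?T. [:0, 1:] ^ box_dim B) = [:1, 1:] * pell_box_poly k n"
    using assms unfolding sum_power_box_dim_Cons sum_top_intervals[OF assms] pell_box_poly_def
    by (subst sum.reindex) (simp_all add: box_dim_def)
  finally show ?thesis .
qed

lemma sum_power_X_group:
  assumes "finite A" "\<And>a. a \<in> A \<Longrightarrow> w a \<le> N"
  shows "(\<Sum>a\<in>A. [:0, 1:] ^ w a) = (\<Sum>i\<le>N. monom (int (card {a \<in> A. w a = i})) i)"
proof -
  have "(\<Sum>a\<in>A. [:0, 1:] ^ w a) = (\<Sum>i\<le>N. \<Sum>a\<in>{a \<in> A. w a = i}. [:0, 1:] ^ w a)"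
    using assms by (intro sum.group[symmetric]) auto
  also have "\<dots> = (\<Sum>i\<le>N. monom (int (card {a \<in> A. w a = i})) i)"
    by (rule sum.cong) (simp_all add: monom_altdef of_nat_poly)
  finally show ?thesis .
qed

lemma pell_string_digits: "set w \<subseteq> {..<k} \<Longrightarrow> pell_string k w"
  by (induction w) (auto intro: pell_string.intros)

lemma pell_string_le: "pell_string k w \<Longrightarrow> set w \<subseteq> {..k}"
  by (induction rule: pell_string.induct) auto

lemma finite_pell_vertices: "finite (pell_vertices n k)"
proof (rule finite_subset)
  show "pell_vertices n k \<subseteq> {w. set w \<subseteq> {..k} \<and> length w = n}"
    using pell_string_le by (auto simp: pell_vertices_def)
qed (rule finite_lists_length_eq, simp)

lemma le_card_pell_vertices:
  assumes "k \<ge> 2"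
  shows "n \<le> card (pell_vertices n k)"
proof -
  define w where "w j = replicate j (1::nat) @ replicate (n - j) 0" for j
  have "inj_on w {..<n}"
  proof (rule inj_onI)
    fix i j assume "i \<in> {..<n}" "j \<in> {..<n}" "w i = w j"
    then have "sum_list (w i) = sum_list (w j)" by simp
    then show "i = j" by (simp add: w_def sum_list_replicate)
  qed
  moreover have "w ` {..<n} \<subseteq> pell_vertices n k"
    using assms by (auto simp: w_def pell_vertices_def intro!: pell_string_digits)
  ultimately have "card {..<n} \<le> card (pell_vertices n k)"
    using card_inj_on_le finite_pell_vertices by blast
  then show ?thesis by simp
qed

lemma cube_poly_pell:
  assumes "k \<ge> 2"
  shows "cube_poly (pell_vertices n k) (pell_adj n k) = pell_box_poly k n"
proof -
  have "box_dim B \<le> card (pell_vertices n k)" if "B \<in> pell_boxes k n" for B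
    using that box_dim_le_length[of B] le_card_pell_vertices[OF assms, of n] by (auto simp: pell_boxes_def)
  then have "pell_box_poly k n =
      (\<Sum>i\<le>card (pell_vertices n k). monom (int (card {B \<in> pell_boxes k n. box_dim B = i})) i)"
    unfolding pell_box_poly_def by (intro sum_power_X_group finite_pell_boxes)
  then show ?thesis
    using num_induced_cubes_pell[OF assms] by (simp add: cube_poly_def pell_boxes_def conj_assoc)
qed

theorem proposition5p3:
  fixes k n :: nat
  assumes "k \<ge> 2"
  shows "degree (cube_poly (pell_vertices n k) (pell_adj n k)) = n \<and>
         cube_poly (pell_vertices n k) (pell_adj n k) =
           (\<Sum>i\<le>n div 2. smult (int ((n - i) choose i))
              ([:int k, int k - 1:] ^ (n - 2 * i) * [:1, 1:] ^ i))"
proof -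
  have k: "k \<ge> 1" using assms by simp
  have "cube_poly (pell_vertices n k) (pell_adj n k) = fib_sum [:int k, int k - 1:] [:1, 1:] n"
    unfolding cube_poly_pell[OF assms]
    by (rule fib_sum_unique) (use pell_box_poly_0 pell_box_poly_1[OF k] pell_box_poly_Suc_Suc[OF k] in auto)
  moreover have "degree (fib_sum [:int k, int k - 1:] [:1, 1:] n) = n"
    using assms by (intro degree_fib_sum) auto
  moreover have "fib_sum [:int k, int k - 1:] [:1, 1:] n = (\<Sum>i\<le>n div 2. smult (int ((n - i) choose i))
      ([:int k, int k - 1:] ^ (n - 2 * i) * [:1, 1:] ^ i))"
    unfolding fib_sum_def fib_term_def by (simp add: of_nat_poly)
  ultimately show ?thesis by simp
qed

end
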